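(* Let $k\ge0$, let $X_n$ be a homogeneous and spatially independent random subcomplex of $\triangle_n$, let $T\subset\triangle_n$ be a finite $(k+1)$-tree with $\mathbb{P}(T\subset X_n)>0$, and let $\sigma_1,\dots,\sigma_i$ be $(k+1)$-simplices of $\triangle_n$ not in $T$. Then \[ \mathbb{P}(\sigma_j\notin X_n\text{ for all }j=1,\dots,i\mid T\subset X_n)\ge1-i\,s_k . \]
   Context: Random subcomplexes of $\triangle_n=2^{[n]}$ (random families of subsets of $[n]$ closed under subsets); homogeneous: law invariant under permutations of $[n]$; spatially independent: $\mathbb{P}(Y_1\cup Y_2\subset X)\mathbb{P}(Y_1\cap Y_2\subset X)=\mathbb{P}(Y_1\subset X)\mathbb{P}(Y_2\subset X)$ for all subcomplexes $Y_1,Y_2$. A $k$-simplex is a $(k+1)$-element set; $K(\tau)$ denotes the set of all subsets of $\tau$. A finite simplicial complex $T$ is a $(k+1)$-tree if for some $k$-simplex $\tau\in T$ it is obtained from $K(\tau)$ by finitely many steps, each adding $K(\tau'\cup\{v\})$ where $\tau'$ is a $k$-simplex already present and $v$ is a vertex not yet present. $s_k=\mathbb{P}(\tau_1\cup\tau_2\in X_n\mid\tau_1,\tau_2\in X_n)$ if $\mathbb{P}(\tau_1,\tau_2\in X_n)>0$ and $s_k=0$ otherwise, where $\tau_1,\tau_2$ are any $k$-simplices of $\triangle_n$ with $\#(\tau_1\cap\tau_2)=k$ (well defined by homogeneity). *)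

theory Defs
  imports "HOL-Probability.Probability"
begin

text \<open>Vertex set [n] = {1..n}; the full ksimplex \<triangle>_n is Pow {1..n}.\<close>

definition subcomplex :: "nat \<Rightarrow> nat set set \<Rightarrow> bool" where
  "subcomplex n K \<longleftrightarrow> K \<subseteq> Pow {1..n} \<and> (\<forall>A\<in>K. \<forall>B. B \<subseteq> A \<longrightarrow> B \<in> K)"

definition random_subcomplex :: "nat \<Rightarrow> nat set set pmf \<Rightarrow> bool" where
  "random_subcomplex n X \<longleftrightarrow> (\<forall>K\<in>set_pmf X. subcomplex n K)"

definition homogeneous :: "nat \<Rightarrow> nat set set pmf \<Rightarrow> bool" where
  "homogeneous n X \<longleftrightarrow>
     (\<forall>\<pi>. bij_betw \<pi> {1..n} {1..n} \<longrightarrow> map_pmf (\<lambda>K. (\<lambda>A. \<pi> ` A) ` K) X = X)"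

definition spatially_independent :: "nat \<Rightarrow> nat set set pmf \<Rightarrow> bool" where
  "spatially_independent n X \<longleftrightarrow>
     (\<forall>Y1 Y2. subcomplex n Y1 \<longrightarrow> subcomplex n Y2 \<longrightarrow>
        measure_pmf.prob X {K. Y1 \<union> Y2 \<subseteq> K} * measure_pmf.prob X {K. Y1 \<inter> Y2 \<subseteq> K}
        = measure_pmf.prob X {K. Y1 \<subseteq> K} * measure_pmf.prob X {K. Y2 \<subseteq> K})"

definition ksimplex :: "nat \<Rightarrow> nat set \<Rightarrow> bool" where
  "ksimplex k \<tau> \<longleftrightarrow> finite \<tau> \<and> card \<tau> = k + 1"

inductive tree :: "nat \<Rightarrow> nat set set \<Rightarrow> bool" for k where
  base: "ksimplex k \<tau> \<Longrightarrow> tree k (Pow \<tau>)"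
| step: "tree k T \<Longrightarrow> \<tau>' \<in> T \<Longrightarrow> ksimplex k \<tau>' \<Longrightarrow> v \<notin> \<Union>T \<Longrightarrow>
           tree k (T \<union> Pow (insert v \<tau>'))"

definition cond_prob :: "'a pmf \<Rightarrow> 'a set \<Rightarrow> 'a set \<Rightarrow> real" where
  "cond_prob X A B = measure_pmf.prob X (A \<inter> B) / measure_pmf.prob X B"

definition s_pair :: "nat set set pmf \<Rightarrow> nat set \<Rightarrow> nat set \<Rightarrow> real" where
  "s_pair X \<tau>1 \<tau>2 =
     (if measure_pmf.prob X {K. \<tau>1 \<in> K \<and> \<tau>2 \<in> K} > 0
      then cond_prob X {K. \<tau>1 \<union> \<tau>2 \<in> K} {K. \<tau>1 \<in> K \<and> \<tau>2 \<in> K}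
      else 0)"

definition adjacent_pair :: "nat \<Rightarrow> nat \<Rightarrow> nat set \<Rightarrow> nat set \<Rightarrow> bool" where
  "adjacent_pair n k \<tau>1 \<tau>2 \<longleftrightarrow> \<tau>1 \<subseteq> {1..n} \<and> \<tau>2 \<subseteq> {1..n} \<and>
     ksimplex k \<tau>1 \<and> ksimplex k \<tau>2 \<and> card (\<tau>1 \<inter> \<tau>2) = k"

text \<open>s_k: value at any adjacent pair (well defined by homogeneity); if no such pair
  exists in \<triangle>_n (n < k+2) we set it to 0.\<close>
definition s :: "nat \<Rightarrow> nat \<Rightarrow> nat set set pmf \<Rightarrow> real" where
  "s n k X = (if \<exists>\<tau>1 \<tau>2. adjacent_pair n k \<tau>1 \<tau>2
              then (let (\<tau>1, \<tau>2) = (SOME p. adjacent_pair n k (fst p) (snd p)) in s_pair X \<tau>1 \<tau>2)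
              else 0)"

end

theory Submission
  imports Defs
begin

text \<open>A \<open>(k+1)\<close>-tree is a flag complex, so every \<open>(k+1)\<close>-simplex \<open>\<sigma> \<notin> T\<close> contains an edge
  \<open>{a, b} \<notin> T\<close>; then \<open>\<tau>\<^sub>1 = \<sigma> - {a}\<close> and \<open>\<tau>\<^sub>2 = \<sigma> - {b}\<close> are adjacent \<open>k\<close>-simplices with
  \<open>\<tau>\<^sub>1 \<union> \<tau>\<^sub>2 = \<sigma>\<close>. Spatial independence applied to \<open>K(\<sigma>)\<close> and \<open>T \<union> K(\<tau>\<^sub>1) \<union> K(\<tau>\<^sub>2)\<close>, whose
  intersection is \<open>K(\<tau>\<^sub>1) \<union> K(\<tau>\<^sub>2)\<close> and whose union is \<open>T \<union> K(\<sigma>)\<close>, gives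
  \<open>P(T, \<sigma>) P(\<tau>\<^sub>1, \<tau>\<^sub>2) = P(\<sigma>) P(T, \<tau>\<^sub>1, \<tau>\<^sub>2) \<le> P(\<sigma>) P(T)\<close>, i.e. \<open>P(\<sigma> | T) \<le> s\<^sub>k\<close>,
  where homogeneity makes the conditional probability the same for all adjacent pairs.
  A union bound over the \<open>\<sigma>\<^sub>j\<close> finishes the proof.\<close>

lemma measure_pmf_prob_cong:
  assumes "\<And>x. x \<in> set_pmf p \<Longrightarrow> x \<in> A \<longleftrightarrow> x \<in> B"
  shows "measure_pmf.prob p A = measure_pmf.prob p B"
proof -
  have "A \<inter> set_pmf p = B \<inter> set_pmf p" using assms by blast
  then show ?thesis by (metis measure_Int_set_pmf)
qed

lemma subcomplex_downward_closed: "subcomplex n K \<Longrightarrow> A \<in> K \<Longrightarrow> B \<subseteq> A \<Longrightarrow> B \<in> K"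
  unfolding subcomplex_def by blast

lemma subcomplex_Pow_subset_iff: "subcomplex n K \<Longrightarrow> Pow A \<subseteq> K \<longleftrightarrow> A \<in> K"
  using subcomplex_downward_closed by blast

lemma random_subcomplex_set_pmf: "random_subcomplex n X \<Longrightarrow> K \<in> set_pmf X \<Longrightarrow> subcomplex n K"
  unfolding random_subcomplex_def by blast

subsection \<open>Trees are downward closed flag complexes\<close>

lemma tree_downward_closed: "tree k T \<Longrightarrow> A \<in> T \<Longrightarrow> B \<subseteq> A \<Longrightarrow> B \<in> T"
  by (induction T arbitrary: A rule: tree.induct) auto

lemma subcomplex_tree: "tree k T \<Longrightarrow> T \<subseteq> Pow {1..n} \<Longrightarrow> subcomplex n T"
  unfolding subcomplex_def using tree_downward_closed by blast

lemma tree_flag: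
  assumes "tree k T" and "\<forall>a\<in>S. \<forall>b\<in>S. {a, b} \<in> T"
  shows "S \<in> T"
  using assms
proof (induction T arbitrary: S rule: tree.induct)
  case (base \<tau>)
  then show ?case by auto
next
  case (step T \<tau>' v)
  show ?case
  proof (cases "v \<in> S")
    case True
    have "{a, v} \<notin> T" for a
      using step.hyps(4) by blast
    then have "S \<subseteq> insert v \<tau>'"
      using step.prems True by blast
    then show ?thesis by blast
  next
    case False
    have "{a, b} \<in> T" if "a \<in> S" "b \<in> S" for a b
      using step.prems that False tree_downward_closed[OF step.hyps(1,2)] by blast
    then show ?thesis using step.IH by blast
  qed
qed

lemma tree_missing_edge:
  assumes "tree k T" and "\<sigma> \<notin> T" and "2 \<le> card \<sigma>"
  obtains a b where "a \<in> \<sigma>" "b \<in> \<sigma>" "a \<noteq> b" "{a, b} \<notin> T"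
proof -
  obtain a b where ab: "a \<in> \<sigma>" "b \<in> \<sigma>" "{a, b} \<notin> T"
    using tree_flag[OF assms(1)] assms(2) by blast
  have "finite \<sigma>"
    using assms(3) card.infinite by fastforce
  then have "card (\<sigma> - {a}) > 0"
    using assms(3) ab(1) by (simp add: card_Diff_singleton)
  then obtain c where c: "c \<in> \<sigma>" "c \<noteq> a"
    by (auto simp: card_gt_0_iff)
  show ?thesis
  proof (cases "a = b")
    case True
    then have "{a, c} \<notin> T"
      using ab(3) tree_downward_closed[OF assms(1), of "{a, c}" "{a}"] by auto
    with ab(1) c show ?thesis using that by blast
  qed (use ab that in blast)
qed

subsection \<open>Adjacent simplices and permutations of the vertex set\<close>

lemma bij_betw_extend_to_permutation:
  assumes "finite A" and "bij_betw f B C" and "B \<subseteq> A" and "C \<subseteq> A"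
  obtains \<pi> where "bij_betw \<pi> A A" and "\<And>x. x \<in> B \<Longrightarrow> \<pi> x = f x"
proof -
  have "finite B" "finite C"
    using assms(1,3,4) finite_subset by blast+
  then have "card (A - B) = card (A - C)"
    using assms(2-4) by (simp add: card_Diff_subset bij_betw_same_card)
  then obtain g where g: "bij_betw g (A - B) (A - C)"
    using finite_same_card_bij[of "A - B" "A - C"] assms(1) by blast
  have "bij_betw (\<lambda>x. if x \<in> B then f x else g x) (B \<union> (A - B)) (C \<union> (A - C))"
    using bij_betw_disjoint_Un[OF assms(2) g] by blast
  moreover have "B \<union> (A - B) = A" "C \<union> (A - C) = A"
    using assms(3,4) by auto
  ultimately show ?thesis
    using that[of "\<lambda>x. if x \<in> B then f x else g x"] by simp
qed

lemma bij_betw_two_sets: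
  assumes "finite A" "finite B" "finite A'" "finite B'"
    and "card (A \<inter> B) = card (A' \<inter> B')" "card (A - B) = card (A' - B')"
    and "card (B - A) = card (B' - A')"
  obtains f where "bij_betw f A A'" "bij_betw f B B'" "bij_betw f (A \<union> B) (A' \<union> B')"
proof -
  obtain f1 where f1: "bij_betw f1 (A \<inter> B) (A' \<inter> B')"
    using assms finite_same_card_bij[of "A \<inter> B" "A' \<inter> B'"] by blast
  obtain f2 where f2: "bij_betw f2 (A - B) (A' - B')"
    using assms finite_same_card_bij[of "A - B" "A' - B'"] by blast
  obtain f3 where f3: "bij_betw f3 (B - A) (B' - A')"
    using assms finite_same_card_bij[of "B - A" "B' - A'"] by blast
  define f where "f x = (if x \<in> A \<inter> B then f1 x else if x \<in> A - B then f2 x else f3 x)" for x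
  have I: "bij_betw f (A \<inter> B) (A' \<inter> B')"
    using f1 by (rule bij_betw_cong[THEN iffD1, rotated]) (simp add: f_def)
  have L: "bij_betw f (A - B) (A' - B')"
    using f2 by (rule bij_betw_cong[THEN iffD1, rotated]) (simp add: f_def)
  have R: "bij_betw f (B - A) (B' - A')"
    using f3 by (rule bij_betw_cong[THEN iffD1, rotated]) (auto simp: f_def)
  have pieces: "(C \<inter> D) \<union> (C - D) = C" "(C \<inter> D) \<union> (D - C) = D" for C D
    by blast+
  have "bij_betw f ((A \<inter> B) \<union> (A - B)) ((A' \<inter> B') \<union> (A' - B'))"
    by (rule bij_betw_combine[OF I L]) blast
  then have fA: "bij_betw f A A'"
    unfolding pieces(1) .
  have "bij_betw f ((A \<inter> B) \<union> (B - A)) ((A' \<inter> B') \<union> (B' - A'))"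
    by (rule bij_betw_combine[OF I R]) blast
  then have fB: "bij_betw f B B'"
    unfolding pieces(2) .
  have "bij_betw f (A \<union> (B - A)) (A' \<union> (B' - A'))"
    by (rule bij_betw_combine[OF fA R]) blast
  then have "bij_betw f (A \<union> B) (A' \<union> B')"
    by simp
  with fA fB show ?thesis using that by blast
qed

lemma adjacent_pair_commute: "adjacent_pair n k \<tau>1 \<tau>2 \<Longrightarrow> adjacent_pair n k \<tau>2 \<tau>1"
  unfolding adjacent_pair_def by (simp add: Int_commute)

lemma adjacent_pair_card_Diff:
  assumes "adjacent_pair n k \<tau>1 \<tau>2"
  shows "card (\<tau>1 - \<tau>2) = 1"
proof -
  have "finite \<tau>1" "card \<tau>1 = k + 1" "card (\<tau>1 \<inter> \<tau>2) = k"
    using assms by (auto simp: adjacent_pair_def ksimplex_def)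
  then show ?thesis
    by (simp add: card_Diff_subset_Int)
qed

lemma adjacent_pair_Diff_singletons:
  assumes "\<sigma> \<subseteq> {1..n}" and "ksimplex (k + 1) \<sigma>" and "a \<in> \<sigma>" "b \<in> \<sigma>" "a \<noteq> b"
  shows "adjacent_pair n k (\<sigma> - {a}) (\<sigma> - {b})"
proof -
  have fin: "finite \<sigma>" and card: "card \<sigma> = k + 2"
    using assms(2) unfolding ksimplex_def by auto
  have "(\<sigma> - {a}) \<inter> (\<sigma> - {b}) = \<sigma> - {a, b}"
    by blast
  then have "card ((\<sigma> - {a}) \<inter> (\<sigma> - {b})) = k"
    using fin card assms(3-5) by (simp add: card_Diff_subset)
  moreover have "card (\<sigma> - {a}) = k + 1" "card (\<sigma> - {b}) = k + 1"
    using fin card assms(3,4) by (simp_all add: card_Diff_singleton)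
  ultimately show ?thesis
    using assms(1) fin by (auto simp: adjacent_pair_def ksimplex_def)
qed

lemma adjacent_pair_permutation:
  assumes adj: "adjacent_pair n k \<tau>1 \<tau>2" and adj': "adjacent_pair n k \<rho>1 \<rho>2"
  obtains \<pi> where "bij_betw \<pi> {1..n} {1..n}" "\<pi> ` \<tau>1 = \<rho>1" "\<pi> ` \<tau>2 = \<rho>2"
proof -
  have "finite \<tau>1" "finite \<tau>2" "finite \<rho>1" "finite \<rho>2"
    "card (\<tau>1 \<inter> \<tau>2) = card (\<rho>1 \<inter> \<rho>2)"
    using adj adj' by (simp_all add: adjacent_pair_def ksimplex_def)
  moreover have "card (\<tau>1 - \<tau>2) = card (\<rho>1 - \<rho>2)" "card (\<tau>2 - \<tau>1) = card (\<rho>2 - \<rho>1)"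
    using adjacent_pair_card_Diff[OF adj] adjacent_pair_card_Diff[OF adj']
      adjacent_pair_card_Diff[OF adjacent_pair_commute[OF adj]]
      adjacent_pair_card_Diff[OF adjacent_pair_commute[OF adj']] by simp_all
  ultimately obtain f where f: "bij_betw f \<tau>1 \<rho>1" "bij_betw f \<tau>2 \<rho>2"
      "bij_betw f (\<tau>1 \<union> \<tau>2) (\<rho>1 \<union> \<rho>2)"
    by (rule bij_betw_two_sets)
  have "\<tau>1 \<union> \<tau>2 \<subseteq> {1..n}" "\<rho>1 \<union> \<rho>2 \<subseteq> {1..n}"
    using adj adj' by (simp_all add: adjacent_pair_def)
  then obtain \<pi> where \<pi>: "bij_betw \<pi> {1..n} {1..n}" "\<And>x. x \<in> \<tau>1 \<union> \<tau>2 \<Longrightarrow> \<pi> x = f x"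
    using bij_betw_extend_to_permutation[OF finite_atLeastAtMost f(3)] by blast
  have "\<pi> ` \<tau>1 = f ` \<tau>1" "\<pi> ` \<tau>2 = f ` \<tau>2"
    using \<pi>(2) by (auto intro: image_cong)
  then have "\<pi> ` \<tau>1 = \<rho>1" "\<pi> ` \<tau>2 = \<rho>2"
    using f(1,2) by (simp_all add: bij_betw_def)
  with \<pi>(1) show ?thesis using that by blast
qed

subsection \<open>Homogeneity\<close>

lemma homogeneousD:
  "homogeneous n X \<Longrightarrow> bij_betw \<pi> {1..n} {1..n} \<Longrightarrow> map_pmf (\<lambda>K. (\<lambda>A. \<pi> ` A) ` K) X = X"
  unfolding homogeneous_def by blast

lemma homogeneous_prob_images:
  assumes "homogeneous n X" and "random_subcomplex n X"
    and "bij_betw \<pi> {1..n} {1..n}" and "R \<subseteq> Pow {1..n}"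
  shows "measure_pmf.prob X {K. \<forall>\<rho>\<in>R. \<pi> ` \<rho> \<in> K} = measure_pmf.prob X {K. \<forall>\<rho>\<in>R. \<rho> \<in> K}"
proof -
  let ?f = "\<lambda>K. (\<lambda>A. \<pi> ` A) ` K"
  have inj: "inj_on (image \<pi>) (Pow {1..n})"
    using assms(3) by (simp add: bij_betw_def inj_on_image_Pow)
  have "measure_pmf.prob X {K. \<forall>\<rho>\<in>R. \<pi> ` \<rho> \<in> K}
      = measure_pmf.prob (map_pmf ?f X) {K. \<forall>\<rho>\<in>R. \<pi> ` \<rho> \<in> K}"
    unfolding homogeneousD[OF assms(1,3)] ..
  also have "\<dots> = measure_pmf.prob X (?f -` {K. \<forall>\<rho>\<in>R. \<pi> ` \<rho> \<in> K})"
    by (rule measure_map_pmf)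
  also have "\<dots> = measure_pmf.prob X {K. \<forall>\<rho>\<in>R. \<rho> \<in> K}"
  proof (rule measure_pmf_prob_cong)
    fix K assume "K \<in> set_pmf X"
    then have "K \<subseteq> Pow {1..n}"
      using random_subcomplex_set_pmf[OF assms(2)] unfolding subcomplex_def by blast
    then have "\<pi> ` \<rho> \<in> ?f K \<longleftrightarrow> \<rho> \<in> K" if "\<rho> \<in> R" for \<rho>
      using inj_on_image_mem_iff[OF inj, of \<rho> K] that assms(4) by blast
    then show "K \<in> ?f -` {K. \<forall>\<rho>\<in>R. \<pi> ` \<rho> \<in> K} \<longleftrightarrow> K \<in> {K. \<forall>\<rho>\<in>R. \<rho> \<in> K}"
      by simp
  qed
  finally show ?thesis .
qed

lemma homogeneous_s_pair_image:
  assumes "homogeneous n X" and "random_subcomplex n X"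
    and "bij_betw \<pi> {1..n} {1..n}" and "\<tau>1 \<subseteq> {1..n}" "\<tau>2 \<subseteq> {1..n}"
  shows "s_pair X (\<pi> ` \<tau>1) (\<pi> ` \<tau>2) = s_pair X \<tau>1 \<tau>2"
proof -
  note images = homogeneous_prob_images[OF assms(1-3)]
  have "{K. \<pi> ` \<tau>1 \<in> K \<and> \<pi> ` \<tau>2 \<in> K} = {K. \<forall>\<rho>\<in>{\<tau>1, \<tau>2}. \<pi> ` \<rho> \<in> K}"
    "{K. \<tau>1 \<in> K \<and> \<tau>2 \<in> K} = {K. \<forall>\<rho>\<in>{\<tau>1, \<tau>2}. \<rho> \<in> K}"
    "{K. \<pi> ` \<tau>1 \<union> \<pi> ` \<tau>2 \<in> K} \<inter> {K. \<pi> ` \<tau>1 \<in> K \<and> \<pi> ` \<tau>2 \<in> K}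
      = {K. \<forall>\<rho>\<in>{\<tau>1 \<union> \<tau>2, \<tau>1, \<tau>2}. \<pi> ` \<rho> \<in> K}"
    "{K. \<tau>1 \<union> \<tau>2 \<in> K} \<inter> {K. \<tau>1 \<in> K \<and> \<tau>2 \<in> K} = {K. \<forall>\<rho>\<in>{\<tau>1 \<union> \<tau>2, \<tau>1, \<tau>2}. \<rho> \<in> K}"
    by (auto simp: image_Un)
  moreover have "{\<tau>1, \<tau>2} \<subseteq> Pow {1..n}" "{\<tau>1 \<union> \<tau>2, \<tau>1, \<tau>2} \<subseteq> Pow {1..n}"
    using assms(4,5) by auto
  ultimately show ?thesis
    unfolding s_pair_def cond_prob_def by (simp only: images)
qed

lemma s_eq_s_pair:
  assumes "homogeneous n X" and "random_subcomplex n X" and "adjacent_pair n k \<tau>1 \<tau>2"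
  shows "s n k X = s_pair X \<tau>1 \<tau>2"
proof -
  define p where "p = (SOME p. adjacent_pair n k (fst p) (snd p))"
  have p: "adjacent_pair n k (fst p) (snd p)"
    unfolding p_def by (rule someI[of _ "(\<tau>1, \<tau>2)"]) (simp add: assms(3))
  have "s n k X = s_pair X (fst p) (snd p)"
    using assms(3) unfolding s_def p_def by (auto simp: case_prod_beta)
  moreover obtain \<pi> where "bij_betw \<pi> {1..n} {1..n}" "\<pi> ` fst p = \<tau>1" "\<pi> ` snd p = \<tau>2"
    using adjacent_pair_permutation[OF p assms(3)] .
  moreover have "fst p \<subseteq> {1..n}" "snd p \<subseteq> {1..n}"
    using p unfolding adjacent_pair_def by simp_all
  ultimately show ?thesis
    using homogeneous_s_pair_image[OF assms(1,2)] by metis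
qed

subsection \<open>Spatial independence\<close>

lemma spatially_independentD:
  assumes "spatially_independent n X" and "subcomplex n Y1" and "subcomplex n Y2"
  shows "measure_pmf.prob X {K. Y1 \<union> Y2 \<subseteq> K} * measure_pmf.prob X {K. Y1 \<inter> Y2 \<subseteq> K}
    = measure_pmf.prob X {K. Y1 \<subseteq> K} * measure_pmf.prob X {K. Y2 \<subseteq> K}"
  using assms unfolding spatially_independent_def by blast

lemma spatially_independent_facets:
  assumes "random_subcomplex n X" and "spatially_independent n X"
    and "subcomplex n T" and "\<sigma> \<subseteq> {1..n}" and "a \<in> \<sigma>" "b \<in> \<sigma>" "{a, b} \<notin> T"
  defines "\<tau>1 \<equiv> \<sigma> - {a}" and "\<tau>2 \<equiv> \<sigma> - {b}"
  shows "measure_pmf.prob X {K. T \<subseteq> K \<and> \<sigma> \<in> K} * measure_pmf.prob X {K. \<tau>1 \<in> K \<and> \<tau>2 \<in> K}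
    = measure_pmf.prob X {K. \<sigma> \<in> K} * measure_pmf.prob X {K. T \<union> Pow \<tau>1 \<union> Pow \<tau>2 \<subseteq> K}"
proof -
  have T_closed: "B \<in> T" if "A \<in> T" "B \<subseteq> A" for A B
    using subcomplex_downward_closed[OF assms(3) that] .
  have "subcomplex n (Pow \<sigma>)"
    using assms(4) unfolding subcomplex_def by auto
  moreover have "subcomplex n (T \<union> Pow \<tau>1 \<union> Pow \<tau>2)"
    using assms(3,4) T_closed unfolding subcomplex_def \<tau>1_def \<tau>2_def by blast
  ultimately have indep: "measure_pmf.prob X {K. Pow \<sigma> \<union> (T \<union> Pow \<tau>1 \<union> Pow \<tau>2) \<subseteq> K}
      * measure_pmf.prob X {K. Pow \<sigma> \<inter> (T \<union> Pow \<tau>1 \<union> Pow \<tau>2) \<subseteq> K}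
    = measure_pmf.prob X {K. Pow \<sigma> \<subseteq> K} * measure_pmf.prob X {K. T \<union> Pow \<tau>1 \<union> Pow \<tau>2 \<subseteq> K}"
    by (rule spatially_independentD[OF assms(2)])
  have union: "Pow \<sigma> \<union> (T \<union> Pow \<tau>1 \<union> Pow \<tau>2) = T \<union> Pow \<sigma>"
    unfolding \<tau>1_def \<tau>2_def by blast
  have "\<rho> \<in> Pow \<tau>1 \<union> Pow \<tau>2" if "\<rho> \<in> T" "\<rho> \<subseteq> \<sigma>" for \<rho>
  proof -
    have "\<not> {a, b} \<subseteq> \<rho>"
      using assms(7) T_closed that(1) by blast
    then show ?thesis using that(2) unfolding \<tau>1_def \<tau>2_def by blast
  qed
  then have inter: "Pow \<sigma> \<inter> (T \<union> Pow \<tau>1 \<union> Pow \<tau>2) = Pow \<tau>1 \<union> Pow \<tau>2"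
    unfolding \<tau>1_def \<tau>2_def by blast
  have Pow_subset: "Pow A \<subseteq> K \<longleftrightarrow> A \<in> K" if "K \<in> set_pmf X" for A K
    using subcomplex_Pow_subset_iff[OF random_subcomplex_set_pmf[OF assms(1) that]] .
  have "measure_pmf.prob X {K. T \<union> Pow \<sigma> \<subseteq> K} = measure_pmf.prob X {K. T \<subseteq> K \<and> \<sigma> \<in> K}"
    "measure_pmf.prob X {K. Pow \<tau>1 \<union> Pow \<tau>2 \<subseteq> K} = measure_pmf.prob X {K. \<tau>1 \<in> K \<and> \<tau>2 \<in> K}"
    "measure_pmf.prob X {K. Pow \<sigma> \<subseteq> K} = measure_pmf.prob X {K. \<sigma> \<in> K}"
    by (rule measure_pmf_prob_cong; simp only: mem_Collect_eq Un_subset_iff Pow_subset)+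
  with indep show ?thesis
    unfolding union inter by simp
qed

lemma prob_tree_and_simplex_le:
  assumes "random_subcomplex n X" and "homogeneous n X" and "spatially_independent n X"
    and "tree k T" and "T \<subseteq> Pow {1..n}"
    and "\<sigma> \<subseteq> {1..n}" and "ksimplex (k + 1) \<sigma>" and "\<sigma> \<notin> T"
  shows "measure_pmf.prob X {K. T \<subseteq> K \<and> \<sigma> \<in> K} \<le> s n k X * measure_pmf.prob X {K. T \<subseteq> K}"
proof -
  have "2 \<le> card \<sigma>"
    using assms(7) unfolding ksimplex_def by simp
  then obtain a b where ab: "a \<in> \<sigma>" "b \<in> \<sigma>" "a \<noteq> b" "{a, b} \<notin> T"
    by (rule tree_missing_edge[OF assms(4,8)])
  define \<tau>1 where "\<tau>1 = \<sigma> - {a}"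
  define \<tau>2 where "\<tau>2 = \<sigma> - {b}"
  have union: "\<tau>1 \<union> \<tau>2 = \<sigma>"
    unfolding \<tau>1_def \<tau>2_def using ab by blast
  have "adjacent_pair n k \<tau>1 \<tau>2"
    unfolding \<tau>1_def \<tau>2_def using adjacent_pair_Diff_singletons assms(6,7) ab(1-3) .
  then have s: "s n k X = s_pair X \<tau>1 \<tau>2"
    by (rule s_eq_s_pair[OF assms(2,1)])
  let ?P = "measure_pmf.prob X"
  have closed: "\<tau>1 \<in> K \<and> \<tau>2 \<in> K" if "K \<in> set_pmf X" "\<sigma> \<in> K" for K
    using union subcomplex_downward_closed[OF random_subcomplex_set_pmf[OF assms(1) that(1)] that(2)]
    by blast
  have "?P {K. \<sigma> \<in> K} = ?P ({K. \<tau>1 \<union> \<tau>2 \<in> K} \<inter> {K. \<tau>1 \<in> K \<and> \<tau>2 \<in> K})"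
    unfolding union by (rule measure_pmf_prob_cong) (use closed in blast)
  then have indep: "?P {K. T \<subseteq> K \<and> \<sigma> \<in> K} * ?P {K. \<tau>1 \<in> K \<and> \<tau>2 \<in> K}
      = ?P ({K. \<tau>1 \<union> \<tau>2 \<in> K} \<inter> {K. \<tau>1 \<in> K \<and> \<tau>2 \<in> K}) * ?P {K. T \<union> Pow \<tau>1 \<union> Pow \<tau>2 \<subseteq> K}"
    using spatially_independent_facets[OF assms(1,3) subcomplex_tree[OF assms(4,5)]
        assms(6) ab(1,2,4), folded \<tau>1_def \<tau>2_def] by (simp only:)
  have mono: "?P {K. T \<union> Pow \<tau>1 \<union> Pow \<tau>2 \<subseteq> K} \<le> ?P {K. T \<subseteq> K}"
    by (rule measure_pmf.finite_measure_mono) auto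
  show ?thesis
  proof (cases "?P {K. \<tau>1 \<in> K \<and> \<tau>2 \<in> K} > 0")
    case True
    then have "?P {K. T \<subseteq> K \<and> \<sigma> \<in> K}
        = s_pair X \<tau>1 \<tau>2 * ?P {K. T \<union> Pow \<tau>1 \<union> Pow \<tau>2 \<subseteq> K}"
      using indep by (simp add: s_pair_def cond_prob_def field_simps)
    also have "\<dots> \<le> s_pair X \<tau>1 \<tau>2 * ?P {K. T \<subseteq> K}"
      using mono by (intro mult_left_mono) (simp_all add: s_pair_def cond_prob_def)
    finally show ?thesis unfolding s .
  next
    case False
    \<comment> \<open>Here \<open>s\<close> is the default value \<open>0\<close>; the event is inside the null event \<open>\<tau>1, \<tau>2 \<in> K\<close>.\<close>
    have "?P {K. T \<subseteq> K \<and> \<sigma> \<in> K} = ?P {K. T \<subseteq> K \<and> \<sigma> \<in> K \<and> \<tau>1 \<in> K \<and> \<tau>2 \<in> K}"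
      using closed by (intro measure_pmf_prob_cong) blast
    also have "\<dots> \<le> ?P {K. \<tau>1 \<in> K \<and> \<tau>2 \<in> K}"
      by (rule measure_pmf.finite_measure_mono) auto
    finally show ?thesis
      using False by (simp add: s s_pair_def)
  qed
qed

theorem lemma4p2:
  fixes n k i :: nat and X :: "nat set set pmf" and T :: "nat set set"
    and \<sigma> :: "nat \<Rightarrow> nat set"
  assumes "random_subcomplex n X"
    and "homogeneous n X"
    and "spatially_independent n X"
    and "tree k T" and "T \<subseteq> Pow {1..n}"
    and "measure_pmf.prob X {K. T \<subseteq> K} > 0"
    and "\<And>j. j \<in> {1..i} \<Longrightarrow> \<sigma> j \<subseteq> {1..n} \<and> ksimplex (k + 1) (\<sigma> j) \<and> \<sigma> j \<notin> T"
  shows "cond_prob X {K. \<forall>j\<in>{1..i}. \<sigma> j \<notin> K} {K. T \<subseteq> K} \<ge> 1 - real i * s n k X"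
proof -
  let ?P = "measure_pmf.prob X"
  define E where "E = {K. T \<subseteq> K}"
  define D where "D = (\<Union>j\<in>{1..i}. {K. T \<subseteq> K \<and> \<sigma> j \<in> K})"
  have "?P D \<le> (\<Sum>j\<in>{1..i}. ?P {K. T \<subseteq> K \<and> \<sigma> j \<in> K})"
    unfolding D_def by (rule measure_pmf.finite_measure_subadditive_finite) auto
  also have "\<dots> \<le> (\<Sum>j\<in>{1..i}. s n k X * ?P E)"
    unfolding E_def using assms(7)
    by (intro sum_mono prob_tree_and_simplex_le[OF assms(1-5)]) auto
  finally have "?P D \<le> real i * s n k X * ?P E" by simp
  moreover have "{K. \<forall>j\<in>{1..i}. \<sigma> j \<notin> K} \<inter> E = E - D" and "D \<subseteq> E"
    unfolding E_def D_def by blast+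
  moreover have "?P E > 0" using assms(6) unfolding E_def .
  ultimately show ?thesis
    unfolding cond_prob_def E_def[symmetric]
    by (simp add: measure_pmf.finite_measure_Diff field_simps)
qed

end
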